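(* Fix $D,\alpha,\theta>0$. There is a constant $C=C(D,\alpha,\theta)$ such that for every finite connected graph $G$ on $n$ vertices satisfying (bal), (mix), (esc) with parameters $D,\alpha,\theta$ (with $n$ sufficiently large), the following holds. Let $u$ be a $\pi$-distributed vertex and, given $u$, let $X,Y$ be two independent lazy random walks started at $u$. Then for every vertex $v$, $$\mathbb E\left[\,\left|\{(i,j):0\le i,j\le r,\ X_i=Y_j=v\}\right|\,\right]\le \frac{C}{n}.$$
   Context: For a finite connected graph $G=(V,E)$ with $n$ vertices, $d(v)$ is the degree of $v$, $\delta(G),\Delta(G)$ are the minimum and maximum degrees. The lazy random walk $(X_t)$ on $G$ at each step stays put with probability $1/2$ and otherwise moves along a uniformly chosen edge incident to the current vertex. Write $\mathbf p^t(u,v)=\Pr_u(X_t=v)$ and $\pi(v)=d(v)/(2|E|)$. The uniform mixing time is $t_{\mathrm{mix}}(G)=\min\{t\ge0:\max_{u,v\in V}|\mathbf p^t(u,v)/\pi(v)-1|\le 1/2\}$, and the bubble sum is $\mathcal B(G)=\sum_{t=0}^{t_{\mathrm{mix}}(G)}(t+1)\sup_{v}\mathbf p^t(v,v)$. Assumptions with parameters $D,\alpha,\theta>0$: (bal) $\Delta(G)/\delta(G)\le D$; (mix) $t_{\mathrm{mix}}(G)\le n^{1/2-\alpha}$; (esc) $\mathcal B(G)\le\theta$. The run time is $r=n^{1/2-\alpha/3}$ (rounded to an integer). *)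

theory Defs
  imports Complex_Main
begin

definition simple_graph :: "nat set \<Rightarrow> (nat \<Rightarrow> nat \<Rightarrow> bool) \<Rightarrow> bool" where
  "simple_graph V E \<longleftrightarrow> finite V \<and> V \<noteq> {} \<and>
     (\<forall>x y. E x y \<longrightarrow> x \<in> V \<and> y \<in> V) \<and>
     (\<forall>x y. E x y \<longrightarrow> E y x) \<and> (\<forall>x. \<not> E x x)"

definition graph_connected :: "nat set \<Rightarrow> (nat \<Rightarrow> nat \<Rightarrow> bool) \<Rightarrow> bool" where
  "graph_connected V E \<longleftrightarrow> (\<forall>x\<in>V. \<forall>y\<in>V. E\<^sup>*\<^sup>* x y)"

definition deg :: "nat set \<Rightarrow> (nat \<Rightarrow> nat \<Rightarrow> bool) \<Rightarrow> nat \<Rightarrow> nat" where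
  "deg V E x = card {y \<in> V. E x y}"

definition min_deg :: "nat set \<Rightarrow> (nat \<Rightarrow> nat \<Rightarrow> bool) \<Rightarrow> nat" where
  "min_deg V E = Min (deg V E ` V)"

definition max_deg :: "nat set \<Rightarrow> (nat \<Rightarrow> nat \<Rightarrow> bool) \<Rightarrow> nat" where
  "max_deg V E = Max (deg V E ` V)"

definition lazy_step :: "nat set \<Rightarrow> (nat \<Rightarrow> nat \<Rightarrow> bool) \<Rightarrow> nat \<Rightarrow> nat \<Rightarrow> real" where
  "lazy_step V E x y = (if x = y then 1/2 else 0) + (if E x y then 1 / (2 * real (deg V E x)) else 0)"

primrec walk_prob :: "nat set \<Rightarrow> (nat \<Rightarrow> nat \<Rightarrow> bool) \<Rightarrow> nat \<Rightarrow> nat \<Rightarrow> nat \<Rightarrow> real" where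
  "walk_prob V E 0 u v = (if u = v then 1 else 0)"
| "walk_prob V E (Suc t) u v = (\<Sum>w\<in>V. walk_prob V E t u w * lazy_step V E w v)"

text \<open>Stationary distribution pi(v) = d(v)/(2|E|); 2|E| is the sum of degrees.\<close>
definition stat_dist :: "nat set \<Rightarrow> (nat \<Rightarrow> nat \<Rightarrow> bool) \<Rightarrow> nat \<Rightarrow> real" where
  "stat_dist V E v = real (deg V E v) / real (\<Sum>w\<in>V. deg V E w)"

definition t_mix :: "nat set \<Rightarrow> (nat \<Rightarrow> nat \<Rightarrow> bool) \<Rightarrow> nat" where
  "t_mix V E = (LEAST t. \<forall>u\<in>V. \<forall>v\<in>V.
      \<bar>walk_prob V E t u v / stat_dist V E v - 1\<bar> \<le> 1/2)"

definition bubble :: "nat set \<Rightarrow> (nat \<Rightarrow> nat \<Rightarrow> bool) \<Rightarrow> real" where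
  "bubble V E = (\<Sum>t\<le>t_mix V E. real (t + 1) * Max ((\<lambda>v. walk_prob V E t v v) ` V))"

definition run_time :: "real \<Rightarrow> nat \<Rightarrow> nat" where
  "run_time \<alpha> n = nat (round (real n powr (1/2 - \<alpha>/3)))"

text \<open>E|{(i,j): 0<=i,j<=r, X_i = Y_j = v}| where u ~ pi and, given u, X and Y
are independent lazy walks from u: by linearity and conditional independence
this equals sum_u pi(u) sum_{i,j<=r} p^i(u,v) p^j(u,v).\<close>
definition expected_intersections :: "nat set \<Rightarrow> (nat \<Rightarrow> nat \<Rightarrow> bool) \<Rightarrow> nat \<Rightarrow> nat \<Rightarrow> real" where
  "expected_intersections V E r v =
     (\<Sum>u\<in>V. stat_dist V E u * (\<Sum>i\<le>r. \<Sum>j\<le>r. walk_prob V E i u v * walk_prob V E j u v))"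

end

theory Submission
  imports Defs
begin

text \<open>By reversibility, the two walks from a stationary start glue into a single return path,
so the expected number of meetings at v is \<pi>(v) times the sum of p^(i+j)(v,v) over i, j \<le> r.
Times i + j \<le> t_mix are paid for by the bubble sum, because k arises as i + j at most k + 1
times; after t_mix the return probability is at most 3/2 \<pi>(v). With \<pi>(v) \<le> D/n from (bal)
and (r + 1)^2 = O(n), the total is \<pi>(v) (\<theta> + O(n) \<pi>(v)) = O(1/n). That t_mix has its defining property at all comes from the convergence of lazy
irreducible chains, proved by Doeblin's contraction of column oscillations.\<close>

primrec kernel_power :: "'a set \<Rightarrow> ('a \<Rightarrow> 'a \<Rightarrow> real) \<Rightarrow> nat \<Rightarrow> 'a \<Rightarrow> 'a \<Rightarrow> real" where
  "kernel_power S P 0 x y = (if x = y then 1 else 0)"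
| "kernel_power S P (Suc t) x y = (\<Sum>z\<in>S. kernel_power S P t x z * P z y)"

lemma walk_prob_eq_kernel_power: "walk_prob V E = kernel_power V (lazy_step V E)"
proof (intro ext)
  show "walk_prob V E t u v = kernel_power V (lazy_step V E) t u v" for t u v
    by (induction t arbitrary: v) simp_all
qed

lemma convex_combination_dist_le:
  fixes w f :: "'a \<Rightarrow> real"
  assumes "\<forall>z\<in>S. 0 \<le> w z" "sum w S = 1" "\<forall>z\<in>S. \<bar>f z - c\<bar> \<le> B"
  shows "\<bar>(\<Sum>z\<in>S. w z * f z) - c\<bar> \<le> B"
proof -
  have "(\<Sum>z\<in>S. w z * f z) - c = (\<Sum>z\<in>S. w z * (f z - c))"
    using assms(2) by (simp add: right_diff_distrib sum_subtractf flip: sum_distrib_right)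
  also have "\<bar>\<dots>\<bar> \<le> (\<Sum>z\<in>S. w z * \<bar>f z - c\<bar>)"
    using sum_abs[of "\<lambda>z. w z * (f z - c)" S] assms(1) by (simp add: abs_mult)
  also have "\<dots> \<le> (\<Sum>z\<in>S. w z * B)"
    using assms(1,3) by (intro sum_mono mult_left_mono) auto
  also have "\<dots> = B"
    using assms(2) by (simp flip: sum_distrib_right)
  finally show ?thesis .
qed

lemma minorized_weights_diff_le:
  fixes a b h :: "'a \<Rightarrow> real" and \<delta> B :: real
  assumes "finite S" "\<forall>z\<in>S. \<delta> \<le> a z" "\<forall>z\<in>S. \<delta> \<le> b z" "sum a S = 1" "sum b S = 1"
    and h: "\<forall>z\<in>S. \<forall>z'\<in>S. h z - h z' \<le> B"
  shows "(\<Sum>z\<in>S. a z * h z) - (\<Sum>z\<in>S. b z * h z) \<le> (1 - card S * \<delta>) * B"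
proof -
  have "S \<noteq> {}" using assms(4) by auto
  define M where "M = Max (h ` S)"
  define m where "m = Min (h ` S)"
  have "M \<in> h ` S" "m \<in> h ` S"
    unfolding M_def m_def using \<open>finite S\<close> \<open>S \<noteq> {}\<close> by auto
  then have "M - m \<le> B" using h by auto
  have hM: "h z \<le> M" and hm: "m \<le> h z" if "z \<in> S" for z
    unfolding M_def m_def using \<open>finite S\<close> that by auto
  have slack: "(\<Sum>z\<in>S. w z - \<delta>) = 1 - card S * \<delta>" if "sum w S = 1" for w :: "'a \<Rightarrow> real"
    using that by (simp add: sum_subtractf)
  have "card S * \<delta> = (\<Sum>z\<in>S. \<delta>)" by simp
  also have "\<dots> \<le> 1" using assms(2,4) sum_mono[of S "\<lambda>_. \<delta>" a] by simp
  finally have "0 \<le> 1 - card S * \<delta>" by simp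
  \<comment> \<open>Remove the common mass \<delta> from both rows; what is left has total mass 1 - card S * \<delta>.\<close>
  have split: "(\<Sum>z\<in>S. w z * h z) = \<delta> * sum h S + (\<Sum>z\<in>S. (w z - \<delta>) * h z)" for w :: "'a \<Rightarrow> real"
    by (simp add: left_diff_distrib sum_subtractf sum_distrib_left)
  have "(\<Sum>z\<in>S. (a z - \<delta>) * h z) \<le> (\<Sum>z\<in>S. (a z - \<delta>) * M)"
    using assms(2) hM by (intro sum_mono mult_left_mono) auto
  also have "\<dots> = (1 - card S * \<delta>) * M" using slack[OF assms(4)] by (simp flip: sum_distrib_right)
  finally have up: "(\<Sum>z\<in>S. (a z - \<delta>) * h z) \<le> (1 - card S * \<delta>) * M" .
  have "(1 - card S * \<delta>) * m = (\<Sum>z\<in>S. (b z - \<delta>) * m)"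
    using slack[OF assms(5)] by (simp flip: sum_distrib_right)
  also have "\<dots> \<le> (\<Sum>z\<in>S. (b z - \<delta>) * h z)"
    using assms(3) hm by (intro sum_mono mult_left_mono) auto
  finally have lo: "(1 - card S * \<delta>) * m \<le> (\<Sum>z\<in>S. (b z - \<delta>) * h z)" .
  have "(\<Sum>z\<in>S. a z * h z) - (\<Sum>z\<in>S. b z * h z) \<le> (1 - card S * \<delta>) * (M - m)"
    using up lo by (simp add: split[of a] split[of b] right_diff_distrib)
  also have "\<dots> \<le> (1 - card S * \<delta>) * B"
    using \<open>M - m \<le> B\<close> \<open>0 \<le> 1 - card S * \<delta>\<close> by (rule mult_left_mono)
  finally show ?thesis .
qed

locale markov_kernel =
  fixes S :: "'a set" and P :: "'a \<Rightarrow> 'a \<Rightarrow> real"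
  assumes finite_S: "finite S"
    and kernel_nonneg: "0 \<le> P x y"
    and kernel_row_sum: "x \<in> S \<Longrightarrow> (\<Sum>y\<in>S. P x y) = 1"
begin

abbreviation p :: "nat \<Rightarrow> 'a \<Rightarrow> 'a \<Rightarrow> real" where "p \<equiv> kernel_power S P"

lemma power_nonneg: "0 \<le> p t x y"
  by (induction t arbitrary: y) (auto intro!: sum_nonneg mult_nonneg_nonneg kernel_nonneg)

lemma power_one: "x \<in> S \<Longrightarrow> p 1 x y = P x y"
  using finite_S by (simp add: if_distrib[of "\<lambda>c. c * _"] cong: if_cong)

lemma power_add: "y \<in> S \<Longrightarrow> p (s + t) x y = (\<Sum>z\<in>S. p s x z * p t z y)"
proof (induction t arbitrary: y)
  case 0
  then show ?case using finite_S by (simp add: if_distrib[of "\<lambda>c. _ * c"] cong: if_cong)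
next
  case (Suc t)
  have "p (s + Suc t) x y = (\<Sum>z'\<in>S. (\<Sum>z\<in>S. p s x z * p t z z') * P z' y)"
    using Suc.IH by simp
  also have "\<dots> = (\<Sum>z'\<in>S. \<Sum>z\<in>S. p s x z * (p t z z' * P z' y))"
    by (simp add: sum_distrib_right mult.assoc)
  also have "\<dots> = (\<Sum>z\<in>S. \<Sum>z'\<in>S. p s x z * (p t z z' * P z' y))"
    by (rule sum.swap)
  also have "\<dots> = (\<Sum>z\<in>S. p s x z * p (Suc t) z y)"
    by (simp add: sum_distrib_left)
  finally show ?case .
qed

lemma power_Suc_left:
  assumes "x \<in> S" "y \<in> S"
  shows "p (Suc t) x y = (\<Sum>z\<in>S. P x z * p t z y)"
proof -
  have "p (Suc t) x y = (\<Sum>z\<in>S. p 1 x z * p t z y)"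
    using power_add[OF assms(2), of 1 t x] by simp
  also have "\<dots> = (\<Sum>z\<in>S. P x z * p t z y)"
    using assms(1) by (simp only: power_one)
  finally show ?thesis .
qed

lemma power_row_sum: "x \<in> S \<Longrightarrow> (\<Sum>y\<in>S. p t x y) = 1"
proof (induction t)
  case 0
  then show ?case using finite_S by simp
next
  case (Suc t)
  have "(\<Sum>y\<in>S. p (Suc t) x y) = (\<Sum>z\<in>S. \<Sum>y\<in>S. p t x z * P z y)"
    unfolding kernel_power.simps by (rule sum.swap)
  also have "\<dots> = (\<Sum>z\<in>S. p t x z * (\<Sum>y\<in>S. P z y))"
    by (simp add: sum_distrib_left)
  also have "\<dots> = (\<Sum>z\<in>S. p t x z)" by (intro sum.cong) (simp_all add: kernel_row_sum)
  finally show ?case using Suc by simp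
qed

lemma power_Suc_ge: "y \<in> S \<Longrightarrow> p t x y * P y z \<le> p (Suc t) x z"
  unfolding kernel_power.simps
  by (rule member_le_sum) (auto intro: finite_S mult_nonneg_nonneg power_nonneg kernel_nonneg)

lemma column_dist_le_mono:
  assumes "s \<le> s'" "y \<in> S" "\<forall>x\<in>S. \<bar>p s x y - c\<bar> \<le> B"
  shows "\<forall>x\<in>S. \<bar>p s' x y - c\<bar> \<le> B"
  using assms(1)
proof (induction s' rule: dec_induct)
  case base
  then show ?case using assms(3) .
next
  case (step s')
  have "\<bar>(\<Sum>z\<in>S. P x z * p s' z y) - c\<bar> \<le> B" if "x \<in> S" for x
    using step.IH kernel_nonneg kernel_row_sum[OF that] by (intro convex_combination_dist_le) auto
  then show ?case using assms(2) by (simp add: power_Suc_left del: kernel_power.simps(2))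
qed

lemma column_oscillation_contract:
  fixes \<delta> B :: real
  assumes "\<forall>x\<in>S. \<forall>z\<in>S. \<delta> \<le> p m x z" "y \<in> S" "\<forall>x\<in>S. \<forall>x'\<in>S. p t x y - p t x' y \<le> B"
  shows "\<forall>x\<in>S. \<forall>x'\<in>S. p (m + t) x y - p (m + t) x' y \<le> (1 - card S * \<delta>) * B"
proof (intro ballI)
  fix x x' assume "x \<in> S" "x' \<in> S"
  with assms show "p (m + t) x y - p (m + t) x' y \<le> (1 - card S * \<delta>) * B"
    unfolding power_add[OF assms(2)]
    by (intro minorized_weights_diff_le finite_S power_row_sum) auto
qed

lemma column_oscillation_power:
  fixes \<delta> :: real
  assumes "\<forall>x\<in>S. \<forall>z\<in>S. \<delta> \<le> p m x z" "y \<in> S"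
  shows "\<forall>x\<in>S. \<forall>x'\<in>S. p (k * m) x y - p (k * m) x' y \<le> (1 - card S * \<delta>) ^ k"
proof (induction k)
  case 0
  then show ?case by simp
next
  case (Suc k)
  show ?case
    using column_oscillation_contract[OF assms Suc.IH] by (simp add: add.commute)
qed

end

locale lazy_irreducible_kernel = markov_kernel +
  assumes lazy: "x \<in> S \<Longrightarrow> 0 < P x x"
    and irreducible: "x \<in> S \<Longrightarrow> y \<in> S \<Longrightarrow> \<exists>t. 0 < p t x y"
begin

lemma power_pos_mono:
  assumes "0 < p t x y" "y \<in> S" "t \<le> t'"
  shows "0 < p t' x y"
  using assms(3)
proof (induction t' rule: dec_induct)
  case base
  then show ?case using assms(1) .
next
  case (step t')
  have "p t' x y * P y y \<le> p (Suc t') x y" using power_Suc_ge[OF assms(2)] .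
  moreover have "0 < p t' x y * P y y" using step.IH lazy[OF assms(2)] by simp
  ultimately show ?case by linarith
qed

lemma power_uniformly_pos: "\<exists>m \<delta>. 0 < \<delta> \<and> (\<forall>x\<in>S. \<forall>y\<in>S. \<delta> \<le> p m x y)"
proof -
  obtain T where T: "\<And>x y. x \<in> S \<Longrightarrow> y \<in> S \<Longrightarrow> 0 < p (T x y) x y"
    using irreducible by (metis (no_types))
  define m where "m = Max ((\<lambda>(x, y). T x y) ` (S \<times> S))"
  have m_pos: "0 < p m x y" if "x \<in> S" "y \<in> S" for x y
  proof (rule power_pos_mono[OF T[OF that] that(2)])
    show "T x y \<le> m" unfolding m_def using finite_S that by (intro Max_ge) auto
  qed
  \<comment> \<open>The extra element 1 keeps the minimum well defined when S is empty.\<close>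
  define \<delta> where "\<delta> = Min (insert 1 ((\<lambda>(x, y). p m x y) ` (S \<times> S)))"
  have "0 < \<delta>" unfolding \<delta>_def using finite_S m_pos by auto
  moreover have "\<delta> \<le> p m x y" if "x \<in> S" "y \<in> S" for x y
    unfolding \<delta>_def using finite_S that by (intro Min_le) auto
  ultimately show ?thesis by blast
qed

lemma column_oscillation_vanishes:
  assumes "0 < \<epsilon>"
  shows "\<exists>t. \<forall>y\<in>S. \<forall>x\<in>S. \<forall>x'\<in>S. p t x y - p t x' y \<le> \<epsilon>"
proof (cases "S = {}")
  case False
  obtain m \<delta> where "0 < \<delta>" and minorized: "\<forall>x\<in>S. \<forall>y\<in>S. \<delta> \<le> p m x y"
    using power_uniformly_pos by blast
  have "1 - card S * \<delta> < 1"
    using \<open>0 < \<delta>\<close> False finite_S by (simp add: card_gt_0_iff)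
  then obtain k where "(1 - card S * \<delta>) ^ k < \<epsilon>"
    using real_arch_pow_inv[OF assms] by blast
  have "p (k * m) x y - p (k * m) x' y \<le> \<epsilon>" if "y \<in> S" "x \<in> S" "x' \<in> S" for x x' y
  proof -
    have "p (k * m) x y - p (k * m) x' y \<le> (1 - card S * \<delta>) ^ k"
      using column_oscillation_power[OF minorized that(1)] that(2,3) by blast
    then show ?thesis using \<open>(1 - card S * \<delta>) ^ k < \<epsilon>\<close> by linarith
  qed
  then show ?thesis by blast
qed simp

end

locale reversible_kernel = markov_kernel +
  fixes \<mu> :: "'a \<Rightarrow> real"
  assumes weight_pos: "x \<in> S \<Longrightarrow> 0 < \<mu> x"
    and detailed_balance: "x \<in> S \<Longrightarrow> y \<in> S \<Longrightarrow> \<mu> x * P x y = \<mu> y * P y x"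
begin

definition stationary :: "'a \<Rightarrow> real" where
  "stationary x = \<mu> x / sum \<mu> S"

lemma power_detailed_balance:
  assumes "x \<in> S" "y \<in> S"
  shows "\<mu> x * p t x y = \<mu> y * p t y x"
  using assms(2)
proof (induction t arbitrary: y)
  case 0
  then show ?case by simp
next
  case (Suc t)
  have "\<mu> x * p (Suc t) x y = (\<Sum>z\<in>S. (\<mu> x * p t x z) * P z y)"
    by (simp add: sum_distrib_left mult.assoc)
  also have "\<dots> = (\<Sum>z\<in>S. p t z x * (\<mu> z * P z y))"
    using Suc.IH by (intro sum.cong) (simp_all add: mult_ac)
  also have "\<dots> = (\<Sum>z\<in>S. \<mu> y * (P y z * p t z x))"
    using detailed_balance Suc.prems by (intro sum.cong) (simp_all add: mult_ac)
  also have "\<dots> = \<mu> y * p (Suc t) y x"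
    using assms(1) Suc.prems by (simp add: power_Suc_left sum_distrib_left del: kernel_power.simps(2))
  finally show ?case .
qed

lemma stationary_pos: "x \<in> S \<Longrightarrow> 0 < stationary x"
  unfolding stationary_def using weight_pos finite_S by (auto intro!: divide_pos_pos sum_pos)

lemma stationary_sum:
  assumes "S \<noteq> {}"
  shows "sum stationary S = 1"
proof -
  have "0 < sum \<mu> S" using sum_pos[OF finite_S assms] weight_pos by blast
  then show ?thesis unfolding stationary_def by (simp flip: sum_divide_distrib)
qed

lemma stationary_detailed_balance:
  "x \<in> S \<Longrightarrow> y \<in> S \<Longrightarrow> stationary x * p t x y = stationary y * p t y x"
  unfolding stationary_def using power_detailed_balance by (simp add: divide_simps mult_ac)

lemma stationary_invariant:
  assumes "y \<in> S"
  shows "(\<Sum>x\<in>S. stationary x * p t x y) = stationary y"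
proof -
  have "(\<Sum>x\<in>S. stationary x * p t x y) = stationary y * (\<Sum>x\<in>S. p t y x)"
    using stationary_detailed_balance assms by (simp add: sum_distrib_left)
  also have "\<dots> = stationary y" using power_row_sum[OF assms] by simp
  finally show ?thesis .
qed

lemma stationary_meeting_sum:
  assumes "v \<in> S"
  shows "(\<Sum>u\<in>S. stationary u * (\<Sum>i\<le>r. \<Sum>j\<le>r. p i u v * p j u v))
    = stationary v * (\<Sum>i\<le>r. \<Sum>j\<le>r. p (i + j) v v)"
proof -
  have "(\<Sum>u\<in>S. stationary u * (\<Sum>i\<le>r. \<Sum>j\<le>r. p i u v * p j u v))
      = (\<Sum>i\<le>r. \<Sum>j\<le>r. \<Sum>u\<in>S. (stationary u * p i u v) * p j u v)"
    by (simp add: sum_distrib_left mult.assoc sum.swap[of _ S])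
  also have "\<dots> = (\<Sum>i\<le>r. \<Sum>j\<le>r. stationary v * (\<Sum>u\<in>S. p i v u * p j u v))"
    using stationary_detailed_balance[OF _ assms]
    by (intro sum.cong refl) (simp add: sum_distrib_left mult.assoc)
  also have "\<dots> = stationary v * (\<Sum>i\<le>r. \<Sum>j\<le>r. p (i + j) v v)"
    using power_add[OF assms] by (simp add: sum_distrib_left)
  finally show ?thesis .
qed

end

locale reversible_lazy_irreducible_kernel = lazy_irreducible_kernel + reversible_kernel
begin

lemma power_converges_uniformly:
  assumes "0 < \<epsilon>"
  shows "\<exists>t. \<forall>u\<in>S. \<forall>v\<in>S. \<bar>p t u v - stationary v\<bar> \<le> \<epsilon>"
proof -
  obtain t where osc: "\<forall>v\<in>S. \<forall>x\<in>S. \<forall>x'\<in>S. p t x v - p t x' v \<le> \<epsilon>"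
    using column_oscillation_vanishes[OF assms] by blast
  \<comment> \<open>stationary v is a convex combination of the column entries p t x v.\<close>
  have "\<bar>(\<Sum>x\<in>S. stationary x * p t x v) - p t u v\<bar> \<le> \<epsilon>" if "u \<in> S" "v \<in> S" for u v
    using osc that stationary_pos stationary_sum
    by (intro convex_combination_dist_le) (auto simp: abs_le_iff less_imp_le)
  then show ?thesis using stationary_invariant by (metis abs_minus_commute)
qed

end

lemma double_sum_diagonal_le:
  fixes a :: "nat \<Rightarrow> real"
  assumes nonneg: "\<And>k. 0 \<le> a k" and tail: "\<And>k. T < k \<Longrightarrow> a k \<le> c" and "0 \<le> c"
  shows "(\<Sum>i\<le>r. \<Sum>j\<le>r. a (i + j)) \<le> (\<Sum>k\<le>T. real (k + 1) * a k) + (real r + 1)\<^sup>2 * c"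
proof -
  define head where "head k = (if k \<le> T then a k else 0)" for k
  have "a k \<le> head k + c" for k
    using tail \<open>0 \<le> c\<close> by (cases "k \<le> T") (auto simp: head_def)
  then have "(\<Sum>i\<le>r. \<Sum>j\<le>r. a (i + j)) \<le> (\<Sum>i\<le>r. \<Sum>j\<le>r. head (i + j) + c)"
    by (intro sum_mono)
  also have "\<dots> = (\<Sum>(i, j)\<in>{..r} \<times> {..r}. head (i + j)) + (real r + 1)\<^sup>2 * c"
    by (simp add: sum.distrib sum.cartesian_product power2_eq_square add.commute)
  also have "(\<Sum>(i, j)\<in>{..r} \<times> {..r}. head (i + j)) \<le> (\<Sum>(i, j)\<in>{(i, j). i + j \<le> T}. head (i + j))"
  proof -
    have fin: "finite {(i, j). i + j \<le> (T::nat)}"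
      by (rule finite_subset[of _ "{..T} \<times> {..T}"]) auto
    have "(\<Sum>(i, j)\<in>{..r} \<times> {..r}. head (i + j))
        \<le> (\<Sum>(i, j)\<in>({..r} \<times> {..r}) \<union> {(i, j). i + j \<le> T}. head (i + j))"
      using fin nonneg by (intro sum_mono2) (auto simp: head_def)
    also have "\<dots> = (\<Sum>(i, j)\<in>{(i, j). i + j \<le> T}. head (i + j))"
      using fin by (intro sum.mono_neutral_right) (auto simp: head_def split: if_splits)
    finally show ?thesis .
  qed
  also have "(\<Sum>(i, j)\<in>{(i, j). i + j \<le> T}. head (i + j)) = (\<Sum>k\<le>T. \<Sum>i\<le>k. head (i + (k - i)))"
    by (rule sum.triangle_reindex_eq)
  also have "\<dots> = (\<Sum>k\<le>T. real (k + 1) * a k)"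
    by (intro sum.cong refl) (simp add: head_def)
  finally show ?thesis by simp
qed

locale connected_graph =
  fixes V :: "nat set" and E :: "nat \<Rightarrow> nat \<Rightarrow> bool"
  assumes simple: "simple_graph V E"
    and connected: "graph_connected V E"
    and nontrivial: "2 \<le> card V"
begin

lemma finite_V: "finite V"
  using simple by (simp add: simple_graph_def)

lemma adj_in_V: "E x y \<Longrightarrow> x \<in> V \<and> y \<in> V"
  using simple by (simp add: simple_graph_def)

lemma adj_sym: "E x y \<Longrightarrow> E y x"
  using simple by (simp add: simple_graph_def)

lemma adj_irrefl: "\<not> E x x"
  using simple by (simp add: simple_graph_def)

lemma deg_pos:
  assumes "x \<in> V"
  shows "0 < deg V E x"
proof -
  have "\<not> V \<subseteq> {x}"
    using card_mono[of "{x}" V] nontrivial by auto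
  then obtain z where "z \<in> V" "z \<noteq> x" by blast
  then have "E\<^sup>*\<^sup>* x z" using connected assms unfolding graph_connected_def by blast
  then obtain w where "E x w" using \<open>z \<noteq> x\<close> by (cases rule: converse_rtranclpE) auto
  then have "{y \<in> V. E x y} \<noteq> {}" using adj_in_V by blast
  then show ?thesis unfolding deg_def using finite_V by (simp add: card_gt_0_iff)
qed

lemma lazy_step_nonneg: "0 \<le> lazy_step V E x y"
  by (simp add: lazy_step_def)

lemma lazy_step_row_sum:
  assumes "x \<in> V"
  shows "(\<Sum>y\<in>V. lazy_step V E x y) = 1"
proof -
  have "(\<Sum>y\<in>V. if x = y then 1/2 else 0) = (1/2 :: real)"
    using assms finite_V by simp
  moreover have "(\<Sum>y\<in>V. if E x y then 1 / (2 * real (deg V E x)) else 0)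
      = real (deg V E x) * (1 / (2 * real (deg V E x)))"
    unfolding deg_def by (simp add: sum.inter_filter[OF finite_V, symmetric])
  ultimately show ?thesis
    using deg_pos[OF assms] by (simp add: lazy_step_def sum.distrib)
qed

lemma lazy_step_detailed_balance:
  "real (deg V E x) * lazy_step V E x y = real (deg V E y) * lazy_step V E y x"
  using deg_pos adj_in_V adj_sym by (auto simp: lazy_step_def)

lemma lazy_step_adj_pos: "E x y \<Longrightarrow> 0 < lazy_step V E x y"
  using deg_pos adj_in_V adj_irrefl by (auto simp: lazy_step_def)

lemma lazy_step_self: "lazy_step V E x x = 1/2"
  using adj_irrefl by (simp add: lazy_step_def)

sublocale walk: markov_kernel V "lazy_step V E"
  using finite_V lazy_step_nonneg lazy_step_row_sum by unfold_locales

lemma walk_prob_pos_if_reachable: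
  assumes "E\<^sup>*\<^sup>* x y"
  shows "\<exists>t. 0 < walk_prob V E t x y"
  using assms
proof (induction rule: rtranclp_induct)
  case base
  have "0 < walk_prob V E 0 x x" by simp
  then show ?case by blast
next
  case (step y z)
  then obtain t where "0 < walk_prob V E t x y" by blast
  then have "0 < walk_prob V E t x y * lazy_step V E y z"
    using lazy_step_adj_pos[OF step(2)] by simp
  also have "\<dots> \<le> walk_prob V E (Suc t) x z"
    using walk.power_Suc_ge adj_in_V[OF step(2)] unfolding walk_prob_eq_kernel_power by blast
  finally show ?case by blast
qed

sublocale walk: reversible_lazy_irreducible_kernel V "lazy_step V E" "\<lambda>x. real (deg V E x)"
  using connected walk_prob_pos_if_reachable deg_pos lazy_step_self lazy_step_detailed_balance
  by unfold_locales (auto simp: graph_connected_def walk_prob_eq_kernel_power lazy_step_self)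

lemma stat_dist_eq_stationary: "stat_dist V E = walk.stationary"
  by (simp add: fun_eq_iff stat_dist_def walk.stationary_def)

lemma stat_dist_pos: "v \<in> V \<Longrightarrow> 0 < stat_dist V E v"
  using walk.stationary_pos by (simp add: stat_dist_eq_stationary)

lemma t_mix_spec:
  "\<forall>u\<in>V. \<forall>v\<in>V. \<bar>walk_prob V E (t_mix V E) u v - stat_dist V E v\<bar> \<le> stat_dist V E v / 2"
proof -
  have criterion: "\<bar>a / stat_dist V E v - 1\<bar> \<le> 1/2 \<longleftrightarrow> \<bar>a - stat_dist V E v\<bar> \<le> stat_dist V E v / 2"
    if "v \<in> V" for a v
  proof -
    have "a / stat_dist V E v - 1 = (a - stat_dist V E v) / stat_dist V E v"
      using stat_dist_pos[OF that] by (simp add: field_simps)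
    then have "\<bar>a / stat_dist V E v - 1\<bar> = \<bar>a - stat_dist V E v\<bar> / stat_dist V E v"
      using stat_dist_pos[OF that] by simp
    then show ?thesis using stat_dist_pos[OF that] by (simp add: divide_le_eq)
  qed
  \<comment> \<open>t_mix is a LEAST, meaningful only once some time with the property is exhibited.\<close>
  define \<epsilon> where "\<epsilon> = Min (stat_dist V E ` V) / 2"
  have "V \<noteq> {}" using nontrivial by auto
  then have "0 < \<epsilon>"
    unfolding \<epsilon>_def using finite_V stat_dist_pos by simp
  then obtain t where "\<forall>u\<in>V. \<forall>v\<in>V. \<bar>walk_prob V E t u v - stat_dist V E v\<bar> \<le> \<epsilon>"
    unfolding walk_prob_eq_kernel_power stat_dist_eq_stationary
    using walk.power_converges_uniformly by blast
  moreover have "\<epsilon> \<le> stat_dist V E v / 2" if "v \<in> V" for v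
    unfolding \<epsilon>_def using finite_V that by simp
  ultimately have "\<forall>u\<in>V. \<forall>v\<in>V. \<bar>walk_prob V E t u v / stat_dist V E v - 1\<bar> \<le> 1/2"
    using criterion by fastforce
  then have "\<forall>u\<in>V. \<forall>v\<in>V. \<bar>walk_prob V E (t_mix V E) u v / stat_dist V E v - 1\<bar> \<le> 1/2"
    unfolding t_mix_def by (rule LeastI)
  then show ?thesis using criterion by blast
qed

lemma return_prob_after_t_mix:
  assumes "t_mix V E \<le> s" "v \<in> V"
  shows "walk_prob V E s v v \<le> 3/2 * stat_dist V E v"
proof -
  have "\<forall>u\<in>V. \<bar>walk_prob V E (t_mix V E) u v - stat_dist V E v\<bar> \<le> stat_dist V E v / 2"
    using t_mix_spec assms(2) by blast
  then have "\<forall>u\<in>V. \<bar>walk_prob V E s u v - stat_dist V E v\<bar> \<le> stat_dist V E v / 2"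
    unfolding walk_prob_eq_kernel_power by (rule walk.column_dist_le_mono[OF assms])
  then have "\<bar>walk_prob V E s v v - stat_dist V E v\<bar> \<le> stat_dist V E v / 2"
    using assms(2) by blast
  then show ?thesis by linarith
qed

lemma weighted_return_sum_le_bubble:
  assumes "v \<in> V"
  shows "(\<Sum>k\<le>t_mix V E. real (k + 1) * walk_prob V E k v v) \<le> bubble V E"
  unfolding bubble_def using assms finite_V by (intro sum_mono mult_left_mono Max_ge) auto

lemma bubble_nonneg: "0 \<le> bubble V E"
proof -
  obtain v where "v \<in> V" using nontrivial by fastforce
  have "0 \<le> (\<Sum>k\<le>t_mix V E. real (k + 1) * walk_prob V E k v v)"
    using walk.power_nonneg by (simp add: sum_nonneg walk_prob_eq_kernel_power)
  then show ?thesis using weighted_return_sum_le_bubble[OF \<open>v \<in> V\<close>] by linarith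
qed

lemma expected_intersections_le:
  assumes "v \<in> V"
  shows "expected_intersections V E r v
    \<le> stat_dist V E v * (bubble V E + 3/2 * (real r + 1)\<^sup>2 * stat_dist V E v)"
proof -
  have "expected_intersections V E r v
      = stat_dist V E v * (\<Sum>i\<le>r. \<Sum>j\<le>r. walk_prob V E (i + j) v v)"
    unfolding expected_intersections_def walk_prob_eq_kernel_power stat_dist_eq_stationary
    by (rule walk.stationary_meeting_sum[OF assms])
  also have "(\<Sum>i\<le>r. \<Sum>j\<le>r. walk_prob V E (i + j) v v)
      \<le> (\<Sum>k\<le>t_mix V E. real (k + 1) * walk_prob V E k v v) + (real r + 1)\<^sup>2 * (3/2 * stat_dist V E v)"
    using return_prob_after_t_mix[OF _ assms] stat_dist_pos[OF assms] walk.power_nonneg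
    by (intro double_sum_diagonal_le) (auto simp: walk_prob_eq_kernel_power)
  also have "\<dots> \<le> bubble V E + 3/2 * (real r + 1)\<^sup>2 * stat_dist V E v"
    using weighted_return_sum_le_bubble[OF assms] by simp
  finally show ?thesis
    using stat_dist_pos[OF assms] by (simp add: mult_left_mono)
qed

lemma stat_dist_le_balance:
  assumes "real (max_deg V E) / real (min_deg V E) \<le> D" "v \<in> V"
  shows "stat_dist V E v \<le> D / real (card V)"
proof -
  have "V \<noteq> {}" "0 < card V" using assms(2) nontrivial by auto
  have "0 < min_deg V E"
    unfolding min_deg_def using finite_V \<open>V \<noteq> {}\<close> deg_pos by simp
  have "real (card V) * real (min_deg V E) = (\<Sum>w\<in>V. real (min_deg V E))" by simp
  also have "\<dots> \<le> (\<Sum>w\<in>V. real (deg V E w))"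
    unfolding min_deg_def using finite_V by (intro sum_mono) auto
  finally have "real (card V) * real (min_deg V E) \<le> real (\<Sum>w\<in>V. deg V E w)" by simp
  moreover have "real (deg V E v) \<le> real (max_deg V E)"
    unfolding max_deg_def using finite_V assms(2) by simp
  ultimately have "stat_dist V E v \<le> real (max_deg V E) / (real (card V) * real (min_deg V E))"
    unfolding stat_dist_def using \<open>0 < min_deg V E\<close> \<open>0 < card V\<close>
    by (intro frac_le) auto
  also have "\<dots> = real (max_deg V E) / real (min_deg V E) / real (card V)"
    by (simp add: mult.commute)
  also have "\<dots> \<le> D / real (card V)"
    by (rule divide_right_mono[OF assms(1)]) simp
  finally show ?thesis .
qed

end

lemma run_time_plus_one_sq_le:
  assumes "0 < \<alpha>" "1 \<le> n"
  shows "(real (run_time \<alpha> n) + 1)\<^sup>2 \<le> 25/4 * real n"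
proof -
  have n: "1 \<le> real n" using assms(2) by simp
  have "real (run_time \<alpha> n) = max 0 (real_of_int (round (real n powr (1/2 - \<alpha>/3))))"
    unfolding run_time_def by simp
  also have "\<dots> \<le> real n powr (1/2 - \<alpha>/3) + 1/2"
    using of_int_round_le[of "real n powr (1/2 - \<alpha>/3)"] by auto
  also have "real n powr (1/2 - \<alpha>/3) \<le> real n powr (1/2)"
    using n assms(1) by (intro powr_mono) auto
  also have "\<dots> = sqrt (real n)" using n by (simp add: powr_half_sqrt)
  finally have "real (run_time \<alpha> n) + 1 \<le> 5/2 * sqrt (real n)"
    using n real_sqrt_ge_one[OF n] by linarith
  then have "(real (run_time \<alpha> n) + 1)\<^sup>2 \<le> (5/2 * sqrt (real n))\<^sup>2"
    by (intro power_mono) auto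
  also have "\<dots> = 25/4 * real n" by (simp add: power2_eq_square field_simps)
  finally show ?thesis .
qed

theorem mainTheorem5:
  fixes D \<alpha> \<theta> :: real
  assumes "D > 0" "\<alpha> > 0" "\<theta> > 0"
  shows "\<exists>C::real. \<exists>N::nat. \<forall>V E. \<forall>n.
    simple_graph V E \<longrightarrow> graph_connected V E \<longrightarrow> n = card V \<longrightarrow> n \<ge> N \<longrightarrow>
    real (max_deg V E) / real (min_deg V E) \<le> D \<longrightarrow>
    real (t_mix V E) \<le> real n powr (1/2 - \<alpha>) \<longrightarrow>
    bubble V E \<le> \<theta> \<longrightarrow>
    (\<forall>v\<in>V. expected_intersections V E (run_time \<alpha> n) v \<le> C / real n)"
proof (intro exI[of _ "D * \<theta> + 10 * D\<^sup>2"] exI[of _ 2] allI impI ballI)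
  fix V E n v
  assume "simple_graph V E" "graph_connected V E" and n: "n = card V" "2 \<le> n"
    and balanced: "real (max_deg V E) / real (min_deg V E) \<le> D"
    and bubble: "bubble V E \<le> \<theta>" and "v \<in> V"
  interpret connected_graph V E using \<open>simple_graph V E\<close> \<open>graph_connected V E\<close> n
    by unfold_locales auto
  let ?\<pi> = "stat_dist V E v" and ?r = "run_time \<alpha> n"
  have "?\<pi> \<le> D / real n" using stat_dist_le_balance[OF balanced \<open>v \<in> V\<close>] n(1) by simp
  moreover have "(real ?r + 1)\<^sup>2 \<le> 25/4 * real n" using run_time_plus_one_sq_le \<open>0 < \<alpha>\<close> n by simp
  moreover have "0 \<le> ?\<pi>" using stat_dist_pos[OF \<open>v \<in> V\<close>] by simp
  ultimately have "?\<pi> * (bubble V E + 3/2 * (real ?r + 1)\<^sup>2 * ?\<pi>)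
      \<le> D / real n * (\<theta> + 3/2 * (25/4 * real n) * (D / real n))"
    using bubble bubble_nonneg by (intro mult_mono add_mono) auto
  also have "\<dots> \<le> (D * \<theta> + 10 * D\<^sup>2) / real n"
    using n \<open>0 < D\<close> by (simp add: field_simps power2_eq_square)
  finally show "expected_intersections V E ?r v \<le> (D * \<theta> + 10 * D\<^sup>2) / real n"
    using expected_intersections_le[OF \<open>v \<in> V\<close>, of ?r] by linarith
qed

end
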